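(* Let $q$ be a prime power, $1\le k$, $k+1<n\le m$, let $g_1,\dots,g_n\in\mathbb{F}_{q^m}$ be linearly independent over $\mathbb{F}_q$, and let $\mathcal{G}$ be the Gabidulin code of dimension $k$ with respect to $g_1,\dots,g_n$. Let $f(x)=x^{q^{k+1}}-a_1x^{q^k}+\sum_{i=0}^{k-1}c_ix^{q^i}$ with $a_1,c_i\in\mathbb{F}_{q^m}$, and $\sigma_f=(f(g_1),\dots,f(g_n))$. Then $\sigma_f$ is not a deep hole of $\mathcal{G}$ in the Hamming metric (i.e. $d_H(\sigma_f,\mathcal{G})\neq n-k$) if and only if there exist $k+1$ distinct elements $g_{i_1},\dots,g_{i_{k+1}}$ of $\{g_1,\dots,g_n\}$ such that $$a_1=\frac{\det\mathcal{R}_k(g_{i_1},\dots,g_{i_{k+1}})}{\det M_{k+1}(g_{i_1},\dots,g_{i_{k+1}})}.$$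
   Context: For $\beta_1,\dots,\beta_s\in\mathbb{F}_{q^m}$, the $t\times s$ Moore matrix $M_t(\beta_1,\dots,\beta_s)$ has $(i,j)$ entry $\beta_j^{q^{i-1}}$, $1\le i\le t$. $\mathcal{R}_k(\beta_1,\dots,\beta_{k+1})$ is the $(k+1)\times(k+1)$ matrix obtained from $M_{k+2}(\beta_1,\dots,\beta_{k+1})$ by deleting the row $(\beta_1^{q^k},\dots,\beta_{k+1}^{q^k})$. $\mathcal{L}_q(x,\mathbb{F}_{q^m})$ is the set of $q$-linearized polynomials $\sum_i a_ix^{q^i}$ over $\mathbb{F}_{q^m}$, with $q$-degree the largest $i$ with $a_i\ne0$. $d_H$ is Hamming distance, $d_H(\mathbf{u},C)=\min_{\mathbf{c}\in C}d_H(\mathbf{u},\mathbf{c})$; a deep hole in the Hamming metric is a word attaining the maximum of $d_H(\cdot,C)$, which for $\mathcal{G}$ is $n-k$. The Gabidulin code of dimension $k$ is $\mathcal{G}=\{(v(g_1),\dots,v(g_n)) : v\in\mathcal{L}_q(x,\mathbb{F}_{q^m}),\ v=0\text{ or }\deg_q(v)<k\}$. *)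

theory Defs
  imports "Jordan_Normal_Form.Determinant" "HOL-Computational_Algebra.Primes"
begin

text \<open>Words of length n are functions nat => 'a; only indices j < n matter.\<close>

definition prime_power :: "nat \<Rightarrow> bool" where
  "prime_power q \<longleftrightarrow> (\<exists>p r. prime p \<and> r \<ge> 1 \<and> q = p ^ r)"

text \<open>Linear independence of g_0..g_(n-1) over the subfield F_q = {x. x^q = x}.\<close>
definition Fq_lin_indep :: "nat \<Rightarrow> nat \<Rightarrow> (nat \<Rightarrow> 'a::field) \<Rightarrow> bool" where
  "Fq_lin_indep q n g \<longleftrightarrow>
     (\<forall>lam::nat \<Rightarrow> 'a. (\<forall>j<n. lam j ^ q = lam j) \<and> (\<Sum>j<n. lam j * g j) = 0
        \<longrightarrow> (\<forall>j<n. lam j = 0))"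

definition lin_eval :: "nat \<Rightarrow> nat \<Rightarrow> (nat \<Rightarrow> 'a::field) \<Rightarrow> 'a \<Rightarrow> 'a" where
  "lin_eval q d a x = (\<Sum>i<d. a i * x ^ (q ^ i))"

definition gabidulin :: "nat \<Rightarrow> nat \<Rightarrow> nat \<Rightarrow> (nat \<Rightarrow> 'a::field) \<Rightarrow> (nat \<Rightarrow> 'a) set" where
  "gabidulin q k n g = {(\<lambda>j. if j < n then lin_eval q k a (g j) else 0) | a. True}"

definition hamming :: "nat \<Rightarrow> (nat \<Rightarrow> 'a) \<Rightarrow> (nat \<Rightarrow> 'a) \<Rightarrow> nat" where
  "hamming n u v = card {j. j < n \<and> u j \<noteq> v j}"

definition hamming_to_code :: "nat \<Rightarrow> (nat \<Rightarrow> 'a) \<Rightarrow> (nat \<Rightarrow> 'a) set \<Rightarrow> nat" where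
  "hamming_to_code n u C = Min ((\<lambda>c. hamming n u c) ` C)"

text \<open>Moore matrix M_t(beta_1..beta_s): entry (i,j) = beta_j^(q^i), 0-based rows.\<close>
definition moore_mat :: "nat \<Rightarrow> nat \<Rightarrow> nat \<Rightarrow> (nat \<Rightarrow> 'a::comm_ring_1) \<Rightarrow> 'a mat" where
  "moore_mat q t s \<beta> = mat t s (\<lambda>(i, j). \<beta> j ^ (q ^ i))"

text \<open>R_k(beta_1..beta_(k+1)): M_(k+2) with the row of exponent q^k deleted.\<close>
definition R_mat :: "nat \<Rightarrow> nat \<Rightarrow> (nat \<Rightarrow> 'a::comm_ring_1) \<Rightarrow> 'a mat" where
  "R_mat q k \<beta> = mat (k+1) (k+1)
     (\<lambda>(i, j). \<beta> j ^ (q ^ (if i < k then i else i + 1)))"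

end

theory Submission
  imports Defs "HOL-Number_Theory.Residues" "HOL-Computational_Algebra.Polynomial"
begin

(*
  A codeword v(g_1), ..., v(g_n) with q-deg v < k agrees with sigma_f exactly where f - v vanishes.
  Moore matrices of F_q-independent elements are nonsingular: a nonzero linearized polynomial of
  q-degree < t has at most q^(t-1) roots, but one in the kernel would vanish on all q^t
  F_q-combinations of the elements. Hence v can always be chosen to agree at k positions, so
  d_H(sigma_f, G) <= n - k, and sigma_f is not a deep hole iff some v agrees at k + 1 positions
  g_(i_1), ..., g_(i_(k+1)). Agreement there means that (v_0 - c_0, ..., v_(k-1) - c_(k-1), a_1)
  solves the transposed Moore system with right-hand side (g_(i_j)^(q^(k+1)))_j, and by Cramer's
  rule the last entry of its unique solution is det R_k / det M_(k+1).
*)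

lemma card_ge_iff_inj_on_lessThan:
  assumes "finite B"
  shows "t \<le> card B \<longleftrightarrow> (\<exists>\<iota>. inj_on \<iota> {..<t} \<and> \<iota> ` {..<t} \<subseteq> B)"
proof
  assume "t \<le> card B"
  thus "\<exists>\<iota>. inj_on \<iota> {..<t} \<and> \<iota> ` {..<t} \<subseteq> B"
    using card_le_inj[of "{..<t}" B] assms by auto
next
  assume "\<exists>\<iota>. inj_on \<iota> {..<t} \<and> \<iota> ` {..<t} \<subseteq> B"
  then obtain \<iota> where "inj_on \<iota> {..<t}" "\<iota> ` {..<t} \<subseteq> B" by blast
  thus "t \<le> card B" using card_inj_on_le assms by fastforce
qed

lemma card_UNIV_field_ge_2: "2 \<le> card (UNIV :: 'a::{finite,field} set)"
proof -
  have "card {0, 1::'a} \<le> card (UNIV :: 'a set)" by (rule card_mono) simp_all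
  thus ?thesis by simp
qed

lemma prime_power_ge_2:
  assumes "prime_power q"
  shows "2 \<le> q"
proof -
  obtain p r where "prime p" "1 \<le> r" "q = p ^ r"
    using assms unfolding prime_power_def by blast
  thus ?thesis
    using self_le_power[of p r] prime_ge_2_nat[of p] by simp
qed

lemma power_card_eq_self:
  fixes x :: "'a::{finite,field}"
  shows "x ^ card (UNIV :: 'a set) = x"
proof (cases "x = 0")
  case True
  then show ?thesis by (simp add: zero_power finite_UNIV_card_ge_0)
next
  case False
  define U where "U = UNIV - {0::'a}"
  have fin: "finite U" and card_U: "card U = card (UNIV :: 'a set) - 1"
    unfolding U_def by (simp_all add: card_Diff_singleton)
  have "inj_on ((*) x) U" using False by (auto intro: inj_onI)
  moreover have "(*) x ` U = U"
  proof
    show "U \<subseteq> (*) x ` U"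
      using False unfolding U_def by (auto intro!: image_eqI[where x = "_ / x"])
  qed (use False in \<open>auto simp: U_def\<close>)
  ultimately have "prod id U = prod ((*) x) U"
    by (metis prod.reindex id_comp)
  also have "\<dots> = x ^ card U * prod id U" by (simp add: prod.distrib)
  finally have "x ^ card U = 1"
    using fin by (simp add: U_def)
  hence "x * x ^ card U = x" by simp
  thus ?thesis
    using card_U finite_UNIV_card_ge_0[where 'a = 'a] by (simp flip: power_Suc)
qed

lemma power_diff_additive:
  fixes x y :: "'a::ring_1"
  assumes "\<And>x y :: 'a. (x + y) ^ N = x ^ N + y ^ N"
  shows "(x - y) ^ N = x ^ N - y ^ N"
  using assms[of "x - y" y] by (simp add: algebra_simps)

lemma power_sum_additive:
  fixes z :: "'b \<Rightarrow> 'a::comm_semiring_1"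
  assumes "\<And>x y :: 'a. (x + y) ^ N = x ^ N + y ^ N" and "0 < N"
  shows "(\<Sum>j\<in>J. z j) ^ N = (\<Sum>j\<in>J. z j ^ N)"
  by (induction J rule: infinite_finite_induct) (simp_all add: assms zero_power)

lemma add_power_prime_power:
  fixes x y :: "'a::{finite,field}"
  assumes "prime_power q" and "card (UNIV :: 'a set) = q ^ m"
  shows "(x + y) ^ (q ^ i) = x ^ (q ^ i) + y ^ (q ^ i)"
proof -
  obtain p r where p: "prime p" "q = p ^ r"
    using assms(1) unfolding prime_power_def by blast
  have char: "prime CHAR('a)"
    by (rule prime_CHAR_semidom) (simp add: finite_imp_CHAR_pos)
  have "CHAR('a) dvd p ^ (r * m)"
    using CHAR_dvd_CARD[where 'a = 'a] assms(2) p(2) by (simp add: power_mult)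
  hence "CHAR('a) = p"
    using char p(1) prime_dvd_power primes_dvd_imp_eq by blast
  hence "q ^ i = CHAR('a) ^ (r * i)" using p(2) by (simp add: power_mult)
  thus ?thesis using freshmans_dream'[OF char] by simp
qed

lemma power_diff_self_eq_mult_geometric:
  fixes x :: "'a::comm_ring_1"
  assumes "1 \<le> q" and "(q - 1) * N = M - 1" and "1 \<le> M"
  shows "x ^ M - x = (x ^ q - x) * (\<Sum>j<N. (x ^ (q - 1)) ^ j)"
proof -
  have "x ^ q = x * x ^ (q - 1)"
    using assms(1) by (simp flip: power_Suc)
  hence "(x ^ q - x) * (\<Sum>j<N. (x ^ (q - 1)) ^ j) = x * ((x ^ (q - 1) - 1) * (\<Sum>j<N. (x ^ (q - 1)) ^ j))"
    by (simp add: algebra_simps)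
  also have "\<dots> = x * ((x ^ (q - 1)) ^ N - 1)"
    by (simp only: power_diff_1_eq)
  also have "\<dots> = x * x ^ (M - 1) - x"
    unfolding power_mult[symmetric] assms(2) by (simp add: right_diff_distrib)
  also have "x * x ^ (M - 1) = x ^ M"
    using assms(3) by (simp flip: power_Suc)
  finally show ?thesis ..
qed

lemma card_power_fixed_points_ge:
  assumes card: "card (UNIV :: 'a::{finite,field} set) = q ^ m" and "2 \<le> q"
  shows "q \<le> card {x::'a. x ^ q = x}"
proof -
  have "m \<noteq> 0" using card card_UNIV_field_ge_2[where 'a = 'a] by (cases m) auto
  have "q \<le> q ^ m" using \<open>m \<noteq> 0\<close> \<open>2 \<le> q\<close> by (simp add: self_le_power)
  define N where "N = (\<Sum>i<m. q ^ i)"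
  have "int ((q - 1) * N) = int (q ^ m - 1)"
    using power_diff_1_eq[of "int q" m] \<open>2 \<le> q\<close> \<open>q \<le> q ^ m\<close>
    by (simp add: N_def)
  hence N: "(q - 1) * N = q ^ m - 1" by (simp only: of_nat_eq_iff)
  have "1 \<le> N" using N \<open>q \<le> q ^ m\<close> \<open>2 \<le> q\<close> by (cases N) auto
  define S :: "'a poly" where "S = (\<Sum>j<N. Polynomial.monom 1 ((q - 1) * j))"
  have poly_S: "poly S x = (\<Sum>j<N. (x ^ (q - 1)) ^ j)" for x
    by (simp add: S_def poly_sum poly_monom power_mult)
  \<comment> \<open>\<open>S\<close> is the cofactor in \<open>X^(q^m) - X = (X^q - X) S\<close>, and every element is a root of \<open>X^(q^m) - X\<close>.\<close>
  have split: "x ^ q = x \<or> poly S x = 0" for x :: 'a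
  proof -
    have "x ^ (q ^ m) - x = (x ^ q - x) * poly S x"
      unfolding poly_S using \<open>2 \<le> q\<close> \<open>q \<le> q ^ m\<close>
      by (intro power_diff_self_eq_mult_geometric[OF _ N]) auto
    hence "(x ^ q - x) * poly S x = 0" using power_card_eq_self[of x] card by simp
    thus ?thesis by simp
  qed
  have "poly S 0 = 1"
    using \<open>1 \<le> N\<close> \<open>2 \<le> q\<close> by (simp add: poly_S zero_power power_0_left)
  hence "S \<noteq> 0" by auto
  moreover have "degree S \<le> q ^ m - q"
  proof -
    have "degree S \<le> (q - 1) * (N - 1)"
      unfolding S_def
      by (intro degree_sum_le order.trans[OF degree_monom_le]) auto
    also have "\<dots> = q ^ m - q" using N \<open>1 \<le> N\<close> \<open>2 \<le> q\<close> by (simp add: diff_mult_distrib2)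
    finally show ?thesis .
  qed
  ultimately have "card {x. poly S x = 0} \<le> q ^ m - q"
    using card_poly_roots_bound[of S] by linarith
  moreover have "UNIV = {x::'a. x ^ q = x} \<union> {x. poly S x = 0}"
    using split by auto
  hence "q ^ m \<le> card {x::'a. x ^ q = x} + card {x. poly S x = 0}"
    using card_Un_le[of "{x::'a. x ^ q = x}" "{x. poly S x = 0}"] card by simp
  ultimately show ?thesis using \<open>q \<le> q ^ m\<close> by linarith
qed

lemma lin_eval_Suc: "lin_eval q (Suc d) a x = lin_eval q d a x + a d * x ^ (q ^ d)"
  by (simp add: lin_eval_def)

lemma lin_eval_vec: "lin_eval q d (\<lambda>i. vec d y $ i) x = lin_eval q d y x"
  unfolding lin_eval_def by (intro sum.cong) auto

lemma card_lin_eval_roots_le: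
  fixes a :: "nat \<Rightarrow> 'a::field"
  assumes "2 \<le> q" and "i0 < d" and "a i0 \<noteq> 0"
  shows "card {x. lin_eval q d a x = 0} \<le> q ^ (d - 1)"
proof -
  define P where "P = (\<Sum>i<d. Polynomial.monom (a i) (q ^ i))"
  have poly_P: "poly P = lin_eval q d a"
    by (simp add: P_def lin_eval_def poly_sum poly_monom fun_eq_iff)
  have "Polynomial.coeff P (q ^ i0) = a i0"
    using assms by (simp add: P_def coeff_sum)
  hence "P \<noteq> 0" using assms(3) by auto
  moreover have "degree P \<le> q ^ (d - 1)"
    unfolding P_def using assms(1)
    by (intro degree_sum_le order.trans[OF degree_monom_le] power_increasing) auto
  ultimately show ?thesis using card_poly_roots_bound[of P] poly_P by simp
qed

lemma lin_eval_Fq_combination: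
  fixes \<mu> \<beta> :: "nat \<Rightarrow> 'a::field"
  assumes frob: "\<And>x y :: 'a. \<And>i. (x + y) ^ (q ^ i) = x ^ (q ^ i) + y ^ (q ^ i)"
    and "0 < q" and fixed: "\<forall>j\<in>J. \<mu> j ^ q = \<mu> j"
  shows "lin_eval q d a (\<Sum>j\<in>J. \<mu> j * \<beta> j) = (\<Sum>j\<in>J. \<mu> j * lin_eval q d a (\<beta> j))"
proof -
  have fixed_iter: "\<mu> j ^ (q ^ i) = \<mu> j" if "j \<in> J" for i j
    by (induction i) (use fixed that in \<open>simp_all add: power_mult mult.commute\<close>)
  have "(\<Sum>j\<in>J. \<mu> j * \<beta> j) ^ (q ^ i) = (\<Sum>j\<in>J. \<mu> j * \<beta> j ^ (q ^ i))" for i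
  proof -
    have "(\<Sum>j\<in>J. \<mu> j * \<beta> j) ^ (q ^ i) = (\<Sum>j\<in>J. (\<mu> j * \<beta> j) ^ (q ^ i))"
      by (rule power_sum_additive[OF frob]) (simp add: \<open>0 < q\<close>)
    also have "\<dots> = (\<Sum>j\<in>J. \<mu> j * \<beta> j ^ (q ^ i))"
      by (intro sum.cong) (simp_all add: power_mult_distrib fixed_iter)
    finally show ?thesis .
  qed
  thus ?thesis
    unfolding lin_eval_def
    by (simp add: sum_distrib_left sum.swap[of _ J] mult.left_commute)
qed

lemma Fq_lin_indep_comp:
  fixes g :: "nat \<Rightarrow> 'a::field"
  assumes indep: "Fq_lin_indep q n g" and "0 < q"
    and inj: "inj_on \<iota> {..<t}" and sub: "\<iota> ` {..<t} \<subseteq> {..<n}"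
  shows "Fq_lin_indep q t (g \<circ> \<iota>)"
  unfolding Fq_lin_indep_def
proof (rule allI, rule impI)
  fix lam :: "nat \<Rightarrow> 'a"
  assume lam: "(\<forall>j<t. lam j ^ q = lam j) \<and> (\<Sum>j<t. lam j * (g \<circ> \<iota>) j) = 0"
  define lam' where "lam' i = (if i \<in> \<iota> ` {..<t} then lam (inv_into {..<t} \<iota> i) else 0)" for i
  have lam'_\<iota>: "lam' (\<iota> j) = lam j" if "j < t" for j
    using that inv_into_f_f[OF inj] by (simp add: lam'_def)
  have "lam' i ^ q = lam' i" for i
  proof (cases "i \<in> \<iota> ` {..<t}")
    case True
    then obtain j where "j < t" "i = \<iota> j" by auto
    thus ?thesis using lam lam'_\<iota> by simp
  qed (use \<open>0 < q\<close> in \<open>simp add: lam'_def zero_power\<close>)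
  moreover have "(\<Sum>i<n. lam' i * g i) = 0"
  proof -
    have "(\<Sum>i<n. lam' i * g i) = (\<Sum>i\<in>\<iota> ` {..<t}. lam' i * g i)"
      using sub by (intro sum.mono_neutral_right) (auto simp: lam'_def)
    also have "\<dots> = (\<Sum>j<t. lam j * g (\<iota> j))"
      by (simp add: sum.reindex[OF inj] lam'_\<iota>)
    finally show ?thesis using lam by simp
  qed
  ultimately have "\<forall>i<n. lam' i = 0" using indep unfolding Fq_lin_indep_def by blast
  thus "\<forall>j<t. lam j = 0" using lam'_\<iota> sub by force
qed

lemma card_Fq_span_ge:
  fixes \<beta> :: "nat \<Rightarrow> 'a::{finite,field}"
  assumes "prime_power q" and card: "card (UNIV :: 'a set) = q ^ m"
    and indep: "Fq_lin_indep q t \<beta>"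
  shows "q ^ t \<le> card {\<Sum>j<t. \<mu> j * \<beta> j | \<mu>. \<forall>j<t. \<mu> j ^ q = \<mu> j}"
proof -
  have "2 \<le> q" using assms(1) by (rule prime_power_ge_2)
  obtain F where F: "F \<subseteq> {x::'a. x ^ q = x}" "card F = q"
    using obtain_subset_with_card_n[OF card_power_fixed_points_ge[OF card \<open>2 \<le> q\<close>]] by blast
  have frob: "(x + y) ^ q = x ^ q + y ^ q" for x y :: 'a
    using add_power_prime_power[OF assms(1,2), of x y 1] by simp
  define comb where "comb \<mu> = (\<Sum>j<t. \<mu> j * \<beta> j)" for \<mu>
  have "inj_on comb (PiE {..<t} (\<lambda>_. F))"
  proof
    fix \<mu> \<nu> assume \<mu>: "\<mu> \<in> PiE {..<t} (\<lambda>_. F)" and \<nu>: "\<nu> \<in> PiE {..<t} (\<lambda>_. F)"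
      and "comb \<mu> = comb \<nu>"
    hence sum0: "(\<Sum>j<t. (\<mu> j - \<nu> j) * \<beta> j) = 0"
      by (simp add: comb_def sum_subtractf left_diff_distrib)
    have fixed: "\<forall>j<t. (\<mu> j - \<nu> j) ^ q = \<mu> j - \<nu> j"
    proof (intro allI impI)
      fix j assume "j < t"
      hence "\<mu> j \<in> F" "\<nu> j \<in> F" using \<mu> \<nu> by (auto simp: PiE_iff)
      hence "\<mu> j ^ q = \<mu> j" "\<nu> j ^ q = \<nu> j" using F(1) by auto
      thus "(\<mu> j - \<nu> j) ^ q = \<mu> j - \<nu> j"
        using power_diff_additive[OF frob, of "\<mu> j" "\<nu> j"] by simp
    qed
    have "\<mu> j - \<nu> j = 0" if "j < t" for j
      using indep[unfolded Fq_lin_indep_def, rule_format, of "\<lambda>j. \<mu> j - \<nu> j" j]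
        fixed sum0 that by simp
    thus "\<mu> = \<nu>" using \<mu> \<nu> by (intro PiE_ext) auto
  qed
  moreover have "comb ` PiE {..<t} (\<lambda>_. F) \<subseteq> {\<Sum>j<t. \<mu> j * \<beta> j | \<mu>. \<forall>j<t. \<mu> j ^ q = \<mu> j}"
  proof
    fix x assume "x \<in> comb ` PiE {..<t} (\<lambda>_. F)"
    then obtain \<mu> where "x = comb \<mu>" "\<forall>j<t. \<mu> j \<in> F" by (auto simp: PiE_iff)
    thus "x \<in> {\<Sum>j<t. \<mu> j * \<beta> j | \<mu>. \<forall>j<t. \<mu> j ^ q = \<mu> j}"
      using F(1) unfolding comb_def by blast
  qed
  ultimately have "card (PiE {..<t} (\<lambda>_. F)) \<le> card {\<Sum>j<t. \<mu> j * \<beta> j | \<mu>. \<forall>j<t. \<mu> j ^ q = \<mu> j}"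
    by (meson card_inj_on_le finite)
  thus ?thesis using F(2) by (simp add: card_PiE)
qed

lemma moore_mat_carrier: "moore_mat q t s \<beta> \<in> carrier_mat t s"
  by (simp add: moore_mat_def)

lemma R_mat_carrier: "R_mat q k \<beta> \<in> carrier_mat (k+1) (k+1)"
  by (simp add: R_mat_def)

lemma transpose_moore_mat_mult_vec:
  assumes "y \<in> carrier_vec t" and "j < t"
  shows "(transpose_mat (moore_mat q t t \<beta>) *\<^sub>v y) $ j = lin_eval q t (\<lambda>i. y $ i) (\<beta> j)"
  using assms
  by (simp add: moore_mat_def lin_eval_def scalar_prod_def atLeast0LessThan mult.commute)

lemma transpose_moore_mat_mult_vec_eq_iff:
  assumes "y \<in> carrier_vec t"
  shows "transpose_mat (moore_mat q t t \<beta>) *\<^sub>v y = vec t w \<longleftrightarrow>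
    (\<forall>j<t. lin_eval q t (\<lambda>i. y $ i) (\<beta> j) = w j)"
proof
  assume eq: "transpose_mat (moore_mat q t t \<beta>) *\<^sub>v y = vec t w"
  show "\<forall>j<t. lin_eval q t (\<lambda>i. y $ i) (\<beta> j) = w j"
  proof (intro allI impI)
    fix j assume "j < t"
    hence "(transpose_mat (moore_mat q t t \<beta>) *\<^sub>v y) $ j = w j" using eq by simp
    thus "lin_eval q t (\<lambda>i. y $ i) (\<beta> j) = w j"
      using transpose_moore_mat_mult_vec[OF assms \<open>j < t\<close>] by simp
  qed
next
  assume "\<forall>j<t. lin_eval q t (\<lambda>i. y $ i) (\<beta> j) = w j"
  thus "transpose_mat (moore_mat q t t \<beta>) *\<^sub>v y = vec t w"
    using transpose_moore_mat_mult_vec[OF assms] by (intro eq_vecI) (simp_all add: moore_mat_def)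
qed

lemma det_moore_mat_nonzero:
  fixes \<beta> :: "nat \<Rightarrow> 'a::{finite,field}"
  assumes q: "prime_power q" and card: "card (UNIV :: 'a set) = q ^ m"
    and indep: "Fq_lin_indep q t \<beta>"
  shows "det (moore_mat q t t \<beta>) \<noteq> 0"
proof
  let ?A = "transpose_mat (moore_mat q t t \<beta>)"
  have A: "?A \<in> carrier_mat t t" by (simp add: moore_mat_def)
  assume "det (moore_mat q t t \<beta>) = 0"
  moreover have "det ?A = det (moore_mat q t t \<beta>)" by (rule det_transpose[OF moore_mat_carrier])
  ultimately have "det ?A = 0" by simp
  then obtain v where v: "v \<in> carrier_vec t" "v \<noteq> 0\<^sub>v t" "?A *\<^sub>v v = 0\<^sub>v t"
    using det_0_iff_vec_prod_zero[OF A] by auto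
  \<comment> \<open>The nonzero linearized polynomial \<open>L\<close> of \<open>q\<close>-degree \<open>< t\<close> vanishes on the \<open>F_q\<close>-span of the \<open>\<beta> j\<close>.\<close>
  define L where "L = lin_eval q t (\<lambda>i. v $ i)"
  obtain i0 where i0: "i0 < t" "v $ i0 \<noteq> 0"
    using v(1,2) by (metis carrier_vecD eq_vecI index_zero_vec)
  have "2 \<le> q" using q by (rule prime_power_ge_2)
  have "L (\<beta> j) = 0" if "j < t" for j
    using transpose_moore_mat_mult_vec[OF v(1) that, of q \<beta>] v(3) that by (simp add: L_def)
  hence "{\<Sum>j<t. \<mu> j * \<beta> j | \<mu>. \<forall>j<t. \<mu> j ^ q = \<mu> j} \<subseteq> {x. L x = 0}"
    using lin_eval_Fq_combination[OF add_power_prime_power[OF q card]] \<open>2 \<le> q\<close>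
    by (auto simp: L_def)
  moreover have "card {x. L x = 0} \<le> q ^ (t - 1)"
    unfolding L_def by (rule card_lin_eval_roots_le[where a = "\<lambda>i. v $ i"]) (use \<open>2 \<le> q\<close> i0 in auto)
  ultimately have "q ^ t \<le> q ^ (t - 1)"
    using card_Fq_span_ge[OF q card indep] by (meson card_mono finite order.trans)
  moreover have "q ^ (t - 1) < q ^ t" using \<open>2 \<le> q\<close> i0(1) by (intro power_strict_increasing) auto
  ultimately show False by simp
qed

lemma moore_interpolation:
  assumes "det (moore_mat q t t \<beta>) \<noteq> 0"
  shows "\<exists>a. \<forall>j<t. lin_eval q t a (\<beta> j) = w j"
proof -
  let ?A = "transpose_mat (moore_mat q t t \<beta>)"
  have A: "?A \<in> carrier_mat t t" by (simp add: moore_mat_def)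
  have "det ?A = det (moore_mat q t t \<beta>)" by (rule det_transpose[OF moore_mat_carrier])
  hence "det ?A \<noteq> 0" using assms by simp
  then obtain B where B: "B \<in> carrier_mat t t" "?A * B = 1\<^sub>m t"
    using det_non_zero_imp_unit[OF A] unfolding Units_def ring_mat_def by auto
  have "?A *\<^sub>v (B *\<^sub>v vec t w) = (?A * B) *\<^sub>v vec t w"
    using A B(1) by simp
  also have "\<dots> = vec t w" using B(2) by simp
  finally have "?A *\<^sub>v (B *\<^sub>v vec t w) = vec t w" .
  thus ?thesis
    using transpose_moore_mat_mult_vec_eq_iff[of "B *\<^sub>v vec t w"] B(1) by auto
qed

lemma moore_last_coeff_iff:
  fixes \<beta> :: "nat \<Rightarrow> 'a::field"
  assumes M: "det (moore_mat q (k+1) (k+1) \<beta>) \<noteq> 0"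
  shows "(\<exists>y. (\<forall>j\<le>k. lin_eval q (k+1) y (\<beta> j) = \<beta> j ^ (q ^ (k+1))) \<and> y k = a1) \<longleftrightarrow>
    a1 = det (R_mat q k \<beta>) / det (moore_mat q (k+1) (k+1) \<beta>)"
proof -
  let ?M = "moore_mat q (k+1) (k+1) \<beta>"
  let ?A = "transpose_mat ?M"
  define w where "w = vec (k+1) (\<lambda>j. \<beta> j ^ (q ^ (k+1)))"
  have A: "?A \<in> carrier_mat (k+1) (k+1)" by (simp add: moore_mat_def)
  have det_A: "det ?A = det ?M" by (rule det_transpose[OF moore_mat_carrier])
  \<comment> \<open>Deleting the row of exponent \<open>q^k\<close> from \<open>M_(k+2)\<close> is the same as replacing it by the last one.\<close>
  have det_R: "det (R_mat q k \<beta>) = det (replace_col ?A w k)"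
  proof -
    have "replace_col ?A w k = transpose_mat (R_mat q k \<beta>)"
      by (intro eq_matI) (auto simp: R_mat_def moore_mat_def replace_col_def w_def)
    moreover have "det (transpose_mat (R_mat q k \<beta>)) = det (R_mat q k \<beta>)"
      by (rule det_transpose[OF R_mat_carrier])
    ultimately show ?thesis by simp
  qed
  have cramer: "y k = det (R_mat q k \<beta>) / det ?M"
    if "\<forall>j\<le>k. lin_eval q (k+1) y (\<beta> j) = \<beta> j ^ (q ^ (k+1))" for y
  proof -
    have "\<forall>j<k+1. lin_eval q (k+1) (\<lambda>i. vec (k+1) y $ i) (\<beta> j) = \<beta> j ^ (q ^ (k+1))"
      using that by (simp add: lin_eval_vec less_Suc_eq_le)
    hence "?A *\<^sub>v vec (k+1) y = w"
      using transpose_moore_mat_mult_vec_eq_iff[of "vec (k+1) y" "k+1" q \<beta>] by (simp add: w_def)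
    hence "det (R_mat q k \<beta>) = y k * det ?M"
      using cramer_lemma_mat[OF A, of "vec (k+1) y" k] det_A det_R by simp
    thus ?thesis using M by simp
  qed
  obtain y where "\<forall>j<k+1. lin_eval q (k+1) y (\<beta> j) = \<beta> j ^ (q ^ (k+1))"
    using moore_interpolation[OF M, of "\<lambda>j. \<beta> j ^ (q ^ (k+1))"] by blast
  hence y: "\<forall>j\<le>k. lin_eval q (k+1) y (\<beta> j) = \<beta> j ^ (q ^ (k+1))"
    by (simp add: less_Suc_eq_le)
  show ?thesis
    using cramer cramer[OF y] y by blast
qed

lemma lin_eval_agree_shift_iff:
  fixes X :: "'a::field set"
  shows "(\<exists>a. \<forall>x\<in>X. x ^ (q ^ (k+1)) - a1 * x ^ (q ^ k) + lin_eval q k c x = lin_eval q k a x) \<longleftrightarrow>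
    (\<exists>y. (\<forall>x\<in>X. lin_eval q (k+1) y x = x ^ (q ^ (k+1))) \<and> y k = a1)"
proof
  assume "\<exists>a. \<forall>x\<in>X. x ^ (q ^ (k+1)) - a1 * x ^ (q ^ k) + lin_eval q k c x = lin_eval q k a x"
  then obtain a where a: "\<forall>x\<in>X. x ^ (q ^ (k+1)) - a1 * x ^ (q ^ k) + lin_eval q k c x = lin_eval q k a x"
    by blast
  define y where "y = (\<lambda>i. a i - c i)(k := a1)"
  have "lin_eval q (k+1) y x = lin_eval q k a x - lin_eval q k c x + a1 * x ^ (q ^ k)" for x
    by (simp add: lin_eval_Suc lin_eval_def y_def sum_subtractf left_diff_distrib)
  moreover have "lin_eval q k a x = x ^ (q ^ (k+1)) - a1 * x ^ (q ^ k) + lin_eval q k c x"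
    if "x \<in> X" for x
    using a that by simp
  ultimately have "\<forall>x\<in>X. lin_eval q (k+1) y x = x ^ (q ^ (k+1))"
    by simp
  thus "\<exists>y. (\<forall>x\<in>X. lin_eval q (k+1) y x = x ^ (q ^ (k+1))) \<and> y k = a1"
    by (auto simp: y_def)
next
  assume "\<exists>y. (\<forall>x\<in>X. lin_eval q (k+1) y x = x ^ (q ^ (k+1))) \<and> y k = a1"
  then obtain y where y: "\<forall>x\<in>X. lin_eval q (k+1) y x = x ^ (q ^ (k+1))" "y k = a1"
    by blast
  have "lin_eval q k (\<lambda>i. y i + c i) x = lin_eval q k y x + lin_eval q k c x" for x
    by (simp add: lin_eval_def sum.distrib distrib_right)
  hence "\<forall>x\<in>X. x ^ (q ^ (k+1)) - a1 * x ^ (q ^ k) + lin_eval q k c x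
      = lin_eval q k (\<lambda>i. y i + c i) x"
    using y by (simp add: lin_eval_Suc algebra_simps)
  thus "\<exists>a. \<forall>x\<in>X. x ^ (q ^ (k+1)) - a1 * x ^ (q ^ k) + lin_eval q k c x = lin_eval q k a x"
    by blast
qed

lemma hamming_eq_diff_card_agree:
  "hamming n u v = n - card {j. j < n \<and> u j = v j}"
proof -
  have "{j. j < n \<and> u j \<noteq> v j} = {..<n} - {j. j < n \<and> u j = v j}" by auto
  thus ?thesis unfolding hamming_def by (simp add: card_Diff_subset subset_eq)
qed

lemma finite_hamming_image: "finite ((\<lambda>c. hamming n u c) ` C)"
  by (rule finite_subset[of _ "{..n}"]) (auto simp: hamming_eq_diff_card_agree)

lemma hamming_to_code_ne_diff_iff:
  assumes "c0 \<in> C" and "k \<le> card {j. j < n \<and> u j = c0 j}"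
  shows "hamming_to_code n u C \<noteq> n - k \<longleftrightarrow> (\<exists>c\<in>C. k < card {j. j < n \<and> u j = c j})"
proof -
  have agree_le: "card {j. j < n \<and> u j = c j} \<le> n" for c
    using card_mono[of "{..<n}" "{j. j < n \<and> u j = c j}"] by auto
  have min_le: "hamming_to_code n u C \<le> hamming n u c" if "c \<in> C" for c
    unfolding hamming_to_code_def using that finite_hamming_image by (intro Min_le) auto
  hence "hamming_to_code n u C \<le> n - card {j. j < n \<and> u j = c0 j}"
    using assms(1) by (simp add: hamming_eq_diff_card_agree)
  hence le: "hamming_to_code n u C \<le> n - k" using assms(2) by linarith
  have "hamming_to_code n u C \<in> (\<lambda>c. hamming n u c) ` C"
    unfolding hamming_to_code_def using assms(1) finite_hamming_image by (intro Min_in) auto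
  then obtain c where c: "c \<in> C" "hamming_to_code n u C = n - card {j. j < n \<and> u j = c j}"
    by (auto simp: hamming_eq_diff_card_agree)
  show ?thesis
  proof
    assume "hamming_to_code n u C \<noteq> n - k"
    thus "\<exists>c\<in>C. k < card {j. j < n \<and> u j = c j}" using c le by (intro bexI[OF _ c(1)]) linarith
  next
    assume "\<exists>c\<in>C. k < card {j. j < n \<and> u j = c j}"
    then obtain c' where "c' \<in> C" "k < card {j. j < n \<and> u j = c' j}" by blast
    moreover have "hamming_to_code n u C \<le> hamming n u c'" using min_le \<open>c' \<in> C\<close> .
    ultimately show "hamming_to_code n u C \<noteq> n - k"
      using agree_le[of c'] by (simp add: hamming_eq_diff_card_agree)
  qed
qed

lemma ex_lin_eval_agreeing_iff_det_ratio:
  fixes \<beta> :: "nat \<Rightarrow> 'a::field"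
  assumes "det (moore_mat q (k+1) (k+1) \<beta>) \<noteq> 0"
  shows "(\<exists>a. \<forall>j\<le>k. \<beta> j ^ (q ^ (k+1)) - a1 * \<beta> j ^ (q ^ k) + lin_eval q k c (\<beta> j)
              = lin_eval q k a (\<beta> j)) \<longleftrightarrow>
    a1 = det (R_mat q k \<beta>) / det (moore_mat q (k+1) (k+1) \<beta>)"
proof -
  have "(\<exists>a. \<forall>j\<le>k. \<beta> j ^ (q ^ (k+1)) - a1 * \<beta> j ^ (q ^ k) + lin_eval q k c (\<beta> j)
          = lin_eval q k a (\<beta> j)) \<longleftrightarrow>
      (\<exists>a. \<forall>x\<in>\<beta> ` {..k}. x ^ (q ^ (k+1)) - a1 * x ^ (q ^ k) + lin_eval q k c x = lin_eval q k a x)"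
    by (intro ex_cong1) auto
  also have "\<dots> \<longleftrightarrow> (\<exists>y. (\<forall>x\<in>\<beta> ` {..k}. lin_eval q (k+1) y x = x ^ (q ^ (k+1))) \<and> y k = a1)"
    by (rule lin_eval_agree_shift_iff)
  also have "\<dots> \<longleftrightarrow> (\<exists>y. (\<forall>j\<le>k. lin_eval q (k+1) y (\<beta> j) = \<beta> j ^ (q ^ (k+1))) \<and> y k = a1)"
    by (intro ex_cong1 conj_cong refl) auto
  also have "\<dots> \<longleftrightarrow> a1 = det (R_mat q k \<beta>) / det (moore_mat q (k+1) (k+1) \<beta>)"
    by (rule moore_last_coeff_iff[OF assms])
  finally show ?thesis .
qed

lemma hamming_to_code_gabidulin_ne_diff_iff:
  fixes g :: "nat \<Rightarrow> 'a::field" and h :: "'a \<Rightarrow> 'a"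
  assumes "k \<le> n" and "\<forall>j<k. lin_eval q k a0 (g j) = h (g j)"
  shows "hamming_to_code n (\<lambda>j. if j < n then h (g j) else 0) (gabidulin q k n g) \<noteq> n - k \<longleftrightarrow>
    (\<exists>\<iota>. inj_on \<iota> {..k} \<and> \<iota> ` {..k} \<subseteq> {..<n} \<and>
       (\<exists>a. \<forall>j\<le>k. h (g (\<iota> j)) = lin_eval q k a (g (\<iota> j))))"
proof -
  define cw where "cw a = (\<lambda>j. if j < n then lin_eval q k a (g j) else 0)" for a
  define agree where "agree a = {j. j < n \<and> h (g j) = lin_eval q k a (g j)}" for a
  have agree_cw: "{j. j < n \<and> (if j < n then h (g j) else 0) = cw a j} = agree a" for a
    by (auto simp: cw_def agree_def)
  have "finite (agree a)" for a
    by (rule finite_subset[of _ "{..<n}"]) (auto simp: agree_def)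
  have "{..<k} \<subseteq> agree a0" using assms by (auto simp: agree_def)
  from card_mono[OF \<open>finite (agree a0)\<close> this] have "k \<le> card (agree a0)" by simp
  hence "hamming_to_code n (\<lambda>j. if j < n then h (g j) else 0) (gabidulin q k n g) \<noteq> n - k \<longleftrightarrow>
      (\<exists>a. k + 1 \<le> card (agree a))"
    using hamming_to_code_ne_diff_iff[of "cw a0" "range cw" k n]
    by (simp add: gabidulin_def cw_def[symmetric] full_SetCompr_eq agree_cw Suc_le_eq)
  also have "\<dots> \<longleftrightarrow> (\<exists>a \<iota>. inj_on \<iota> {..k} \<and> \<iota> ` {..k} \<subseteq> agree a)"
    using card_ge_iff_inj_on_lessThan[OF \<open>finite (agree _)\<close>, of "k+1"]
    by (simp add: lessThan_Suc_atMost)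
  also have "\<dots> \<longleftrightarrow> (\<exists>\<iota>. inj_on \<iota> {..k} \<and> \<iota> ` {..k} \<subseteq> {..<n} \<and>
      (\<exists>a. \<forall>j\<le>k. h (g (\<iota> j)) = lin_eval q k a (g (\<iota> j))))"
    by (auto simp: agree_def image_subset_iff ball_conj_distrib)
  finally show ?thesis .
qed

theorem lemma4:
  fixes q m n k :: nat
    and g :: "nat \<Rightarrow> 'a::{finite, field}"
    and a1 :: 'a and c :: "nat \<Rightarrow> 'a"
  assumes "prime_power q"
    and "card (UNIV :: 'a set) = q ^ m"
    and "1 \<le> k" and "k + 1 < n" and "n \<le> m"
    and "Fq_lin_indep q n g"
  defines "f \<equiv> (\<lambda>x::'a. x ^ (q ^ (k+1)) - a1 * x ^ (q ^ k) + (\<Sum>i<k. c i * x ^ (q ^ i)))"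
  defines "\<sigma> \<equiv> (\<lambda>j. if j < n then f (g j) else 0)"
  shows "hamming_to_code n \<sigma> (gabidulin q k n g) \<noteq> n - k \<longleftrightarrow>
    (\<exists>\<iota>::nat \<Rightarrow> nat. inj_on \<iota> {..k} \<and> \<iota> ` {..k} \<subseteq> {..<n} \<and>
       a1 = det (R_mat q k (g \<circ> \<iota>)) / det (moore_mat q (k+1) (k+1) (g \<circ> \<iota>)))"
proof -
  have det_nonzero: "det (moore_mat q t t (g \<circ> \<iota>)) \<noteq> 0"
    if "inj_on \<iota> {..<t}" and "\<iota> ` {..<t} \<subseteq> {..<n}" for \<iota> t
    using prime_power_ge_2[OF assms(1)] that
    by (intro det_moore_mat_nonzero[OF assms(1,2)] Fq_lin_indep_comp[OF assms(6)]) auto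
  have f_eq: "f x = x ^ (q ^ (k+1)) - a1 * x ^ (q ^ k) + lin_eval q k c x" for x
    by (simp add: f_def lin_eval_def)
  obtain a0 where "\<forall>j<k. lin_eval q k a0 (g j) = f (g j)"
    using moore_interpolation[OF det_nonzero[of id k], of "\<lambda>j. f (g j)"] assms(4) by auto
  hence "hamming_to_code n \<sigma> (gabidulin q k n g) \<noteq> n - k \<longleftrightarrow>
      (\<exists>\<iota>. inj_on \<iota> {..k} \<and> \<iota> ` {..k} \<subseteq> {..<n} \<and>
         (\<exists>a. \<forall>j\<le>k. f (g (\<iota> j)) = lin_eval q k a (g (\<iota> j))))"
    unfolding \<sigma>_def using assms(4) by (intro hamming_to_code_gabidulin_ne_diff_iff) auto
  also have "\<dots> \<longleftrightarrow> (\<exists>\<iota>. inj_on \<iota> {..k} \<and> \<iota> ` {..k} \<subseteq> {..<n} \<and>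
      a1 = det (R_mat q k (g \<circ> \<iota>)) / det (moore_mat q (k+1) (k+1) (g \<circ> \<iota>)))"
  proof (intro ex_cong1 conj_cong refl)
    fix \<iota> assume "inj_on \<iota> {..k}" and "\<iota> ` {..k} \<subseteq> {..<n}"
    hence "det (moore_mat q (k+1) (k+1) (g \<circ> \<iota>)) \<noteq> 0"
      using det_nonzero[of \<iota> "k+1"] by (simp add: lessThan_Suc_atMost)
    from ex_lin_eval_agreeing_iff_det_ratio[OF this, of a1 c]
    show "(\<exists>a. \<forall>j\<le>k. f (g (\<iota> j)) = lin_eval q k a (g (\<iota> j))) \<longleftrightarrow>
        a1 = det (R_mat q k (g \<circ> \<iota>)) / det (moore_mat q (k+1) (k+1) (g \<circ> \<iota>))"
      by (simp add: f_eq)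
  qed
  finally show ?thesis .
qed

end
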